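(* Let $[W]\in\mathcal S$ be nonzero. Then the minimal weight of $[W]$ is $\ge 2$. If the minimal weight of $[W]$ is $2$, then up to a permutation of the three coordinates, $[W]$ has the form (1) $(a,a,0)$ with $a\in\Phi\setminus\{0\}$, or (2) $(a+b+c,a+c,b+c)$ with $a,b\in\Phi\setminus\{0\}$, $c\in\Psi$, $a+c$ and $b+c$ non-singular, and $a+b+c$ non-zero singular.
   Context: $EE_8=\sqrt2E_8$, $U=V_{EE_8}^+$; $R(U)$, the group (under fusion) of isomorphism classes of irreducible $U$-modules, $\cong\mathbb Z_2^{10}$, is a quadratic space over $\mathbb Z_2$ with $q([M])=0$ or $1$ according as the $L(0)$-weights of $M$ lie in $\mathbb Z$ or $\frac12+\mathbb Z$. Nonzero singular classes have minimal weight $1$ and non-singular classes have minimal weight $\frac12$. $R(U^{\otimes3})=R(U)^3$, where $(a,b,c)$ is the class of $A\otimes B\otimes C$, with $q(a,b,c)=q(a)+q(b)+q(c)$. $\Phi,\Psi$ are maximal totally singular subspaces of $R(U)$ with $\Phi\cap\Psi=0$; $\mathcal S=\mathrm{span}_{\mathbb Z_2}\{(a,a,0),(0,a,a),(b,b,b)\mid a\in\Phi,b\in\Psi\}$. The minimal weight of a class $[W]$ is the minimal $L(0)$-eigenvalue on the irreducible module $W$. *)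

theory Defs
  imports Complex_Main "HOL-Library.Product_Plus"
begin

text \<open>Abstract model of R(U): a Z_2-vector space 'v (an abelian group with x + x = 0)
  of order 2^10, with a quadratic form q taking values in {0,1} (= Z_2).\<close>

definition polar :: "('v::ab_group_add \<Rightarrow> int) \<Rightarrow> 'v \<Rightarrow> 'v \<Rightarrow> int" where
  "polar q x y = (q (x + y) + q x + q y) mod 2"

text \<open>Z_2-subspace: contains 0 and closed under addition (negation is trivial in char 2).\<close>
definition zsub :: "'a::ab_group_add set \<Rightarrow> bool" where
  "zsub H \<longleftrightarrow> 0 \<in> H \<and> (\<forall>x\<in>H. \<forall>y\<in>H. x + y \<in> H)"

definition zspan :: "'a::ab_group_add set \<Rightarrow> 'a set" where
  "zspan G = \<Inter> {H. zsub H \<and> G \<subseteq> H}"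

definition singular :: "('v \<Rightarrow> int) \<Rightarrow> 'v \<Rightarrow> bool" where
  "singular q x \<longleftrightarrow> q x = 0"

definition totally_singular :: "('v::ab_group_add \<Rightarrow> int) \<Rightarrow> 'v set \<Rightarrow> bool" where
  "totally_singular q H \<longleftrightarrow> zsub H \<and> (\<forall>x\<in>H. singular q x)"

definition max_totally_singular :: "('v::ab_group_add \<Rightarrow> int) \<Rightarrow> 'v set \<Rightarrow> bool" where
  "max_totally_singular q H \<longleftrightarrow> totally_singular q H \<and>
     (\<forall>K. totally_singular q K \<and> H \<subseteq> K \<longrightarrow> K = H)"

text \<open>R(U) for U = V_{EE_8}^+: Z_2^10 with a nonsingular quadratic form of plus type
  (Witt index 5).\<close>
definition RU_space :: "('v::{finite,ab_group_add} \<Rightarrow> int) \<Rightarrow> bool" where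
  "RU_space q \<longleftrightarrow>
     (\<forall>x::'v. x + x = 0) \<and> card (UNIV :: 'v set) = 2^10 \<and>
     (\<forall>x. q x \<in> {0,1}) \<and> q 0 = 0 \<and>
     (\<forall>x y z. polar q (x + y) z = (polar q x z + polar q y z) mod 2) \<and>
     (\<forall>x. (\<forall>y. polar q x y = 0) \<longrightarrow> x = 0) \<and>
     (\<exists>H. totally_singular q H \<and> card H = 2^5)"

text \<open>Minimal weight of an irreducible U-module class: 0 for [U], 1 for nonzero singular,
  1/2 for non-singular classes; for U^{\<otimes>3}, the minimal weight of A\<otimes>B\<otimes>C is the sum.\<close>
definition minwt :: "('v::zero \<Rightarrow> int) \<Rightarrow> 'v \<Rightarrow> real" where
  "minwt q x = (if x = 0 then 0 else if q x = 0 then 1 else 1/2)"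

definition minwt3 :: "('v::zero \<Rightarrow> int) \<Rightarrow> 'v \<times> 'v \<times> 'v \<Rightarrow> real" where
  "minwt3 q w = (case w of (a, b, c) \<Rightarrow> minwt q a + minwt q b + minwt q c)"

definition S_code :: "'v::ab_group_add set \<Rightarrow> 'v set \<Rightarrow> ('v \<times> 'v \<times> 'v) set" where
  "S_code \<Phi> \<Psi> = zspan ({(a, a, 0) | a. a \<in> \<Phi>} \<union> {(0, a, a) | a. a \<in> \<Phi>} \<union> {(b, b, b) | b. b \<in> \<Psi>})"

definition perms3 :: "'v \<times> 'v \<times> 'v \<Rightarrow> ('v \<times> 'v \<times> 'v) set" where
  "perms3 w = (case w of (x, y, z) \<Rightarrow>
     {(x, y, z), (x, z, y), (y, x, z), (y, z, x), (z, x, y), (z, y, x)})"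

end

theory Submission
  imports Defs
begin

text \<open>Every element of the code is \<open>(x + c, x + y + c, y + c)\<close> with \<open>x, y \<in> \<Phi>\<close> and
  \<open>c \<in> \<Psi>\<close>. If \<open>c = 0\<close>, all three coordinates lie in \<open>\<Phi>\<close> and are singular, and they sum
  to \<open>0\<close>, so a nonzero word has at least two nonzero coordinates, each of weight 1. If
  \<open>c \<noteq> 0\<close>, no coordinate vanishes because \<open>\<Phi> \<inter> \<Psi> = 0\<close>; moreover \<open>q (a + c)\<close> is the
  polar form \<open>B(a, c)\<close> for \<open>a \<in> \<Phi>\<close>, and since \<open>B(\<cdot>, c)\<close> is additive, an even number of
  coordinates is non-singular. The weight is therefore \<open>3\<close>, or \<open>2\<close> with exactly one
  singular coordinate; if the other two are \<open>a + c\<close> and \<open>b + c\<close>, it is \<open>a + b + c\<close>.\<close>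

definition twin_form :: "'v::zero set \<Rightarrow> 'v \<times> 'v \<times> 'v \<Rightarrow> bool" where
  "twin_form \<Phi> W \<longleftrightarrow> (\<exists>a \<in> \<Phi>. a \<noteq> 0 \<and> W = (a, a, 0))"

definition coset_form ::
    "('v::ab_group_add \<Rightarrow> int) \<Rightarrow> 'v set \<Rightarrow> 'v set \<Rightarrow> 'v \<times> 'v \<times> 'v \<Rightarrow> bool" where
  "coset_form q \<Phi> \<Psi> W \<longleftrightarrow>
     (\<exists>a \<in> \<Phi>. \<exists>b \<in> \<Phi>. \<exists>c \<in> \<Psi>. a \<noteq> 0 \<and> b \<noteq> 0 \<and>
        \<not> singular q (a + c) \<and> \<not> singular q (b + c) \<and>
        a + b + c \<noteq> 0 \<and> singular q (a + b + c) \<and>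
        W = (a + b + c, a + c, b + c))"

definition coset_triples :: "'a::ab_group_add set \<Rightarrow> 'a set \<Rightarrow> ('a \<times> 'a \<times> 'a) set" where
  "coset_triples \<Phi> \<Psi> = {(x + c, x + y + c, y + c) | x y c. x \<in> \<Phi> \<and> y \<in> \<Phi> \<and> c \<in> \<Psi>}"

lemma zspan_least: "zsub H \<Longrightarrow> G \<subseteq> H \<Longrightarrow> zspan G \<subseteq> H"
  unfolding zspan_def by blast

lemma zsub_coset_triples:
  assumes "zsub \<Phi>" "zsub \<Psi>"
  shows "zsub (coset_triples \<Phi> \<Psi>)"
  unfolding zsub_def
proof (intro conjI ballI)
  show "0 \<in> coset_triples \<Phi> \<Psi>"
    using assms by (auto simp: coset_triples_def zsub_def zero_prod_def intro!: exI[of _ 0])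
next
  fix u v assume "u \<in> coset_triples \<Phi> \<Psi>" "v \<in> coset_triples \<Phi> \<Psi>"
  then obtain x y c x' y' c' where
    u: "u = (x + c, x + y + c, y + c)" "x \<in> \<Phi>" "y \<in> \<Phi>" "c \<in> \<Psi>" and
    v: "v = (x' + c', x' + y' + c', y' + c')" "x' \<in> \<Phi>" "y' \<in> \<Phi>" "c' \<in> \<Psi>"
    unfolding coset_triples_def by blast
  have "u + v = ((x + x') + (c + c'), (x + x') + (y + y') + (c + c'), (y + y') + (c + c'))"
    using u v by (simp add: ac_simps)
  moreover have "x + x' \<in> \<Phi>" "y + y' \<in> \<Phi>" "c + c' \<in> \<Psi>"
    using u v assms by (auto simp: zsub_def)
  ultimately show "u + v \<in> coset_triples \<Phi> \<Psi>"
    unfolding coset_triples_def by blast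
qed

lemma S_code_subset_coset_triples:
  assumes "zsub \<Phi>" "zsub \<Psi>"
  shows "S_code \<Phi> \<Psi> \<subseteq> coset_triples \<Phi> \<Psi>"
  unfolding S_code_def
proof (rule zspan_least[OF zsub_coset_triples[OF assms]], safe)
  have "0 \<in> \<Phi>" "0 \<in> \<Psi>" using assms by (auto simp: zsub_def)
  fix a
  show "a \<in> \<Phi> \<Longrightarrow> (a, a, 0) \<in> coset_triples \<Phi> \<Psi>"
    using \<open>0 \<in> \<Phi>\<close> \<open>0 \<in> \<Psi>\<close> unfolding coset_triples_def
    by (intro CollectI exI[of _ a] exI[of _ 0]) simp
  show "a \<in> \<Phi> \<Longrightarrow> (0, a, a) \<in> coset_triples \<Phi> \<Psi>"
    using \<open>0 \<in> \<Phi>\<close> \<open>0 \<in> \<Psi>\<close> unfolding coset_triples_def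
    by (intro CollectI exI[of _ 0] exI[of _ a]) simp
  show "a \<in> \<Psi> \<Longrightarrow> (a, a, a) \<in> coset_triples \<Phi> \<Psi>"
    using \<open>0 \<in> \<Phi>\<close> unfolding coset_triples_def
    by (intro CollectI exI[of _ 0] exI[of _ 0] exI[of _ a]) simp
qed

locale char2_quadratic =
  fixes q :: "'v::ab_group_add \<Rightarrow> int"
  assumes add_self: "(x::'v) + x = 0"
    and q_range: "q x \<in> {0, 1}"
    and polar_add: "polar q (x + y) z = (polar q x z + polar q y z) mod 2"
begin

lemma minus_eq_self: "- a = (a::'v)"
  by (rule minus_unique[OF add_self])

lemma add_eq_0_iff: "(a::'v) + b = 0 \<longleftrightarrow> a = b"
  by (simp add: add_eq_0_iff2 minus_eq_self)

lemma add_add_cancel: "(a::'v) + b + b = a"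
  by (simp add: add.assoc add_self)

lemma add_ne_0_of_disjoint:
  assumes "\<Phi> \<inter> \<Psi> = {0}" "a \<in> \<Phi>" "c \<in> \<Psi>" "c \<noteq> 0"
  shows "(a::'v) + c \<noteq> 0"
proof
  assume "a + c = 0"
  then have "c = a" by (simp add: add_eq_0_iff)
  then show False using assms by blast
qed

lemma q_add_singular_eq_polar:
  assumes "q a = 0" "q c = 0"
  shows "q (a + c) = polar q a c"
  using assms q_range[of "a + c"] unfolding polar_def by auto

lemma q_add_parity:
  assumes "q x = 0" "q y = 0" "q (x + y) = 0" "q c = 0"
  shows "q (x + y + c) = (q (x + c) + q (y + c)) mod 2"
  using polar_add[of x y c] assms by (simp add: q_add_singular_eq_polar)

lemma minwt3_twin_triple:
  assumes \<Phi>: "totally_singular q \<Phi>" and "x \<in> \<Phi>" "y \<in> \<Phi>" and nz: "(x, x + y, y) \<noteq> 0"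
  shows "2 \<le> minwt3 q (x, x + y, y) \<and>
    (minwt3 q (x, x + y, y) = 2 \<longrightarrow> (\<exists>W' \<in> perms3 (x, x + y, y). twin_form \<Phi> W'))"
proof -
  have "x + y \<in> \<Phi>" using \<Phi> \<open>x \<in> \<Phi>\<close> \<open>y \<in> \<Phi>\<close> by (auto simp: totally_singular_def zsub_def)
  then have "q x = 0" "q y = 0" "q (x + y) = 0"
    using \<Phi> \<open>x \<in> \<Phi>\<close> \<open>y \<in> \<Phi>\<close> by (auto simp: totally_singular_def singular_def)
  then have wt: "minwt3 q (x, x + y, y) =
      (if x = 0 then 0 else 1) + (if x = y then 0 else 1) + (if y = 0 then 0 else 1)"
    by (simp add: minwt3_def minwt_def add_eq_0_iff)
  consider "x = 0" | "y = 0" | "x = y" | "x \<noteq> 0" "y \<noteq> 0" "x \<noteq> y" by blast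
  then show ?thesis
  proof cases
    case 1
    then have "(y, y, 0) \<in> perms3 (x, x + y, y)" "y \<noteq> 0"
      using nz by (auto simp: perms3_def zero_prod_def)
    then show ?thesis using 1 wt \<open>y \<in> \<Phi>\<close> by (auto simp: twin_form_def)
  next
    case 2
    then have "(x, x, 0) \<in> perms3 (x, x + y, y)" "x \<noteq> 0"
      using nz by (auto simp: perms3_def zero_prod_def)
    then show ?thesis using 2 wt \<open>x \<in> \<Phi>\<close> by (auto simp: twin_form_def)
  next
    case 3
    then have "(x, x, 0) \<in> perms3 (x, x + y, y)" "x \<noteq> 0"
      using nz add_self by (auto simp: perms3_def zero_prod_def)
    then show ?thesis using 3 wt \<open>x \<in> \<Phi>\<close> by (auto simp: twin_form_def)
  next
    case 4
    then show ?thesis using wt by simp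
  qed
qed

lemma coset_formI:
  assumes \<Phi>: "totally_singular q \<Phi>" and \<Psi>: "totally_singular q \<Psi>" and disj: "\<Phi> \<inter> \<Psi> = {0}"
    and "a \<in> \<Phi>" "b \<in> \<Phi>" "c \<in> \<Psi>" "c \<noteq> 0"
    and "\<not> singular q (a + c)" "\<not> singular q (b + c)" "singular q (a + b + c)"
  shows "coset_form q \<Phi> \<Psi> (a + b + c, a + c, b + c)"
proof -
  have "q c = 0" using \<Psi> \<open>c \<in> \<Psi>\<close> by (auto simp: totally_singular_def singular_def)
  then have "a \<noteq> 0" "b \<noteq> 0" using assms(8,9) by (auto simp: singular_def)
  moreover have "a + b \<in> \<Phi>" using \<Phi> assms(4,5) by (auto simp: totally_singular_def zsub_def)
  then have "a + b + c \<noteq> 0" using add_ne_0_of_disjoint[OF disj _ \<open>c \<in> \<Psi>\<close> \<open>c \<noteq> 0\<close>] by blast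
  ultimately show ?thesis using assms unfolding coset_form_def by blast
qed

lemma minwt3_coset_triple:
  assumes \<Phi>: "totally_singular q \<Phi>" and \<Psi>: "totally_singular q \<Psi>" and disj: "\<Phi> \<inter> \<Psi> = {0}"
    and x: "x \<in> \<Phi>" and y: "y \<in> \<Phi>" and c: "c \<in> \<Psi>" "c \<noteq> 0"
  shows "2 \<le> minwt3 q (x + c, x + y + c, y + c) \<and>
    (minwt3 q (x + c, x + y + c, y + c) = 2 \<longrightarrow>
      (\<exists>W' \<in> perms3 (x + c, x + y + c, y + c). coset_form q \<Phi> \<Psi> W'))"
proof -
  have xy: "x + y \<in> \<Phi>" using \<Phi> x y by (auto simp: totally_singular_def zsub_def)
  have "q x = 0" "q y = 0" "q (x + y) = 0" "q c = 0"
    using \<Phi> \<Psi> x y xy c by (auto simp: totally_singular_def singular_def)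
  then have parity: "q (x + y + c) = (q (x + c) + q (y + c)) mod 2"
    by (rule q_add_parity)
  have "x + c \<noteq> 0" "y + c \<noteq> 0" "x + y + c \<noteq> 0"
    using add_ne_0_of_disjoint[OF disj _ c] x y xy by auto
  then have wt: "minwt3 q (x + c, x + y + c, y + c) =
      (if q (x + c) = 0 then 1 else 1/2) + (if q (x + y + c) = 0 then 1 else 1/2) +
      (if q (y + c) = 0 then 1 else 1/2)"
    by (simp add: minwt3_def minwt_def)
  have cf: "coset_form q \<Phi> \<Psi> (a + b + c, a + c, b + c)"
    if "a \<in> \<Phi>" "b \<in> \<Phi>" "q (a + c) = 1" "q (b + c) = 1" "q (a + b + c) = 0" for a b
    using coset_formI[OF \<Phi> \<Psi> disj that(1,2) c] that(3-5) by (simp add: singular_def)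
  consider "q (x + c) = 0" "q (y + c) = 0" "q (x + y + c) = 0"
    | "q (x + c) = 1" "q (y + c) = 1" "q (x + y + c) = 0"
    | "q (x + c) = 1" "q (y + c) = 0" "q (x + y + c) = 1"
    | "q (x + c) = 0" "q (y + c) = 1" "q (x + y + c) = 1"
    using q_range[of "x + c"] q_range[of "y + c"] parity by fastforce
  then show ?thesis
  proof cases
    case 1
    then show ?thesis using wt by simp
  next
    case 2
    then show ?thesis using wt cf[OF x y] by (auto simp: perms3_def)
  next
    case 3
    have swap: "x + y + x + c = y + c" by (metis add.commute add_add_cancel)
    have "coset_form q \<Phi> \<Psi> (y + c, x + y + c, x + c)" using 3 cf[OF xy x, unfolded swap] by simp
    then show ?thesis using 3 wt by (auto simp: perms3_def)
  next
    case 4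
    have cancel: "x + y + y + c = x + c" by (simp add: add_add_cancel)
    have "coset_form q \<Phi> \<Psi> (x + c, x + y + c, y + c)" using 4 cf[OF xy y, unfolded cancel] by simp
    then show ?thesis using 4 wt by (auto simp: perms3_def)
  qed
qed

end

lemma RU_space_char2_quadratic: "RU_space q \<Longrightarrow> char2_quadratic q"
  by (simp add: RU_space_def char2_quadratic_def)

theorem lemma2p19:
  fixes q :: "'v::{finite,ab_group_add} \<Rightarrow> int"
    and \<Phi> \<Psi> :: "'v set"
    and W :: "'v \<times> 'v \<times> 'v"
  assumes RU: "RU_space q"
    and Phi: "max_totally_singular q \<Phi>"
    and Psi: "max_totally_singular q \<Psi>"
    and disj: "\<Phi> \<inter> \<Psi> = {0}"
    and W_in: "W \<in> S_code \<Phi> \<Psi>"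
    and W_nz: "W \<noteq> 0"
  shows "minwt3 q W \<ge> 2 \<and>
    (minwt3 q W = 2 \<longrightarrow>
      (\<exists>W' \<in> perms3 W.
         (\<exists>a \<in> \<Phi>. a \<noteq> 0 \<and> W' = (a, a, 0)) \<or>
         (\<exists>a \<in> \<Phi>. \<exists>b \<in> \<Phi>. \<exists>c \<in> \<Psi>. a \<noteq> 0 \<and> b \<noteq> 0 \<and>
            \<not> singular q (a + c) \<and> \<not> singular q (b + c) \<and>
            a + b + c \<noteq> 0 \<and> singular q (a + b + c) \<and>
            W' = (a + b + c, a + c, b + c))))"
proof -
  interpret char2_quadratic q using RU by (rule RU_space_char2_quadratic)
  have \<Phi>: "totally_singular q \<Phi>" and \<Psi>: "totally_singular q \<Psi>"
    using Phi Psi by (auto simp: max_totally_singular_def)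
  then obtain x y c where xyc: "x \<in> \<Phi>" "y \<in> \<Phi>" "c \<in> \<Psi>" and W: "W = (x + c, x + y + c, y + c)"
    using S_code_subset_coset_triples W_in
    by (force simp: totally_singular_def coset_triples_def)
  show ?thesis
  proof (cases "c = 0")
    case True
    then have "2 \<le> minwt3 q W \<and> (minwt3 q W = 2 \<longrightarrow> (\<exists>W' \<in> perms3 W. twin_form \<Phi> W'))"
      using minwt3_twin_triple[OF \<Phi> xyc(1,2)] W W_nz by simp
    then show ?thesis unfolding twin_form_def by blast
  next
    case False
    then have "2 \<le> minwt3 q W \<and>
        (minwt3 q W = 2 \<longrightarrow> (\<exists>W' \<in> perms3 W. coset_form q \<Phi> \<Psi> W'))"
      using minwt3_coset_triple[OF \<Phi> \<Psi> disj xyc] W by simp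
    then show ?thesis unfolding coset_form_def by blast
  qed
qed

end
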